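(* Let $k\ge 2$ and $i\in\{1,\ldots,k-1\}$. If $\binom{k}{i}$ is odd and $\binom{k-1}{i}$ is even, then $J(2k,k,i)$ does not admit perfect state transfer.
   Context: $J(2k,k,i)$ is the graph on the $k$-subsets of $\{1,\ldots,2k\}$ with $A\sim B$ iff $|A\cap B|=i$. For a simple graph $X$ with adjacency matrix $A$, let $\mathcal{H}_X(t)=e^{itA}$. $X$ admits perfect state transfer (PST) if $|\mathcal{H}_X(\tau)_{u,v}|=1$ for some vertices $u\ne v$ and some $\tau>0$. *)

theory Defs
  imports Complex_Main
begin

text \<open>A (weighted) graph is given by a finite vertex set V and an adjacency
  function adj; its adjacency matrix is the V x V matrix with entries adj u v.\<close>

fun adj_pow :: "'a set \<Rightarrow> ('a \<Rightarrow> 'a \<Rightarrow> complex) \<Rightarrow> nat \<Rightarrow> 'a \<Rightarrow> 'a \<Rightarrow> complex" where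
  "adj_pow V adj 0 u v = (if u = v then 1 else 0)"
| "adj_pow V adj (Suc n) u v = (\<Sum>w\<in>V. adj u w * adj_pow V adj n w v)"

text \<open>Transition matrix H(t) = exp(i t A), entrywise as the exponential power series.\<close>
definition transition :: "'a set \<Rightarrow> ('a \<Rightarrow> 'a \<Rightarrow> complex) \<Rightarrow> real \<Rightarrow> 'a \<Rightarrow> 'a \<Rightarrow> complex" where
  "transition V adj t u v =
     (\<Sum>n. (\<i> * complex_of_real t) ^ n / of_nat (fact n) * adj_pow V adj n u v)"

definition has_PST :: "'a set \<Rightarrow> ('a \<Rightarrow> 'a \<Rightarrow> complex) \<Rightarrow> bool" where
  "has_PST V adj \<longleftrightarrow>
     (\<exists>u\<in>V. \<exists>v\<in>V. u \<noteq> v \<and> (\<exists>\<tau>>0. cmod (transition V adj \<tau> u v) = 1))"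

definition J_vertices :: "nat \<Rightarrow> nat set set" where
  "J_vertices k = {A. A \<subseteq> {1..2*k} \<and> card A = k}"

definition J_adj :: "nat \<Rightarrow> nat set \<Rightarrow> nat set \<Rightarrow> complex" where
  "J_adj i A B = (if A \<noteq> B \<and> card (A \<inter> B) = i then 1 else 0)"

end

theory Submission
  imports Defs
begin

text \<open>Perfect state transfer from u to v at time \<tau> concentrates row u of the unitary
  H(\<tau>) = e^{i\<tau>A} on v, so H(\<tau>)_{uv} g(v) = e^{i\<tau>\<theta>} g(u) for every eigenfunction g of A
  with eigenvalue \<theta>. In J(2k,k,i) the constants, the differences [x \<in> C] - [x' \<in> C] and the
  alternating sums [{x,y} \<subseteq> C] - [{x,y'} \<subseteq> C] - [{x',y} \<subseteq> C] + [{x',y'} \<subseteq> C] are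
  eigenfunctions for eigenvalues \<theta>0, \<theta>1, \<theta>2. If u and v meet, two choices of x, x'
  give H(\<tau>)_{uv} = e^{i\<tau>\<theta>1} = -H(\<tau>)_{uv}, which is impossible. If u and v are disjoint,
  e^{i\<tau>(\<theta>0-\<theta>1)} = -1 and e^{i\<tau>(\<theta>0-\<theta>2)} = 1, while
  k(k-1)(\<theta>0-\<theta>2) = i(2k-1)(\<theta>0-\<theta>1). The parity hypotheses force i and k to have the
  same 2-adic valuation, so (\<theta>0-\<theta>2)/(\<theta>0-\<theta>1) = p/q with p odd, and then
  -1 = (e^{i\<tau>(\<theta>0-\<theta>1)})^p = (e^{i\<tau>(\<theta>0-\<theta>2)})^q = 1.\<close>


section \<open>Continuous-time quantum walks on real symmetric graphs\<close>

definition eigenfunction :: "'a set \<Rightarrow> ('a \<Rightarrow> 'a \<Rightarrow> complex) \<Rightarrow> real \<Rightarrow> ('a \<Rightarrow> complex) \<Rightarrow> bool" where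
  "eigenfunction V adj \<theta> g \<longleftrightarrow> (\<forall>x\<in>V. (\<Sum>w\<in>V. adj x w * g w) = of_real \<theta> * g x)"

lemma transition_altdef:
  "transition V adj t u v = (\<Sum>n. (\<i> * of_real t) ^ n /\<^sub>R fact n * adj_pow V adj n u v)"
  by (simp add: transition_def scaleR_conv_of_real divide_inverse of_real_inverse[symmetric] mult.commute)

lemma adj_pow_norm_le:
  assumes "\<And>u w. u \<in> V \<Longrightarrow> w \<in> V \<Longrightarrow> cmod (adj u w) \<le> M" "u \<in> V"
  shows "cmod (adj_pow V adj n u v) \<le> (real (card V) * M) ^ n"
  using assms(2)
proof (induction n arbitrary: u)
  case 0
  then show ?case by simp
next
  case (Suc n)
  have "0 \<le> M"
    using assms(1)[OF Suc.prems Suc.prems] norm_ge_zero by (rule order_trans[rotated])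
  have "cmod (adj_pow V adj (Suc n) u v) \<le> (\<Sum>w\<in>V. cmod (adj u w) * cmod (adj_pow V adj n w v))"
    by (simp add: norm_sum norm_mult flip: norm_mult)
  also have "\<dots> \<le> (\<Sum>w\<in>V. M * (real (card V) * M) ^ n)"
    by (intro sum_mono mult_mono) (use Suc assms(1) \<open>0 \<le> M\<close> in auto)
  also have "\<dots> = (real (card V) * M) ^ Suc n"
    by simp
  finally show ?case .
qed

lemma adj_pow_add:
  assumes "finite V" "u \<in> V"
  shows "adj_pow V adj (m + n) u v = (\<Sum>w\<in>V. adj_pow V adj m u w * adj_pow V adj n w v)"
  using assms(2)
proof (induction m arbitrary: u)
  case 0
  then show ?case
    using assms(1) by (simp add: if_distrib[of "\<lambda>x. x * _"] sum.delta cong: if_cong)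
next
  case (Suc m)
  have "adj_pow V adj (Suc m + n) u v = (\<Sum>w\<in>V. adj u w * (\<Sum>z\<in>V. adj_pow V adj m w z * adj_pow V adj n z v))"
    by (simp add: Suc.IH)
  also have "\<dots> = (\<Sum>z\<in>V. (\<Sum>w\<in>V. adj u w * adj_pow V adj m w z) * adj_pow V adj n z v)"
    unfolding sum_distrib_left sum_distrib_right mult.assoc by (rule sum.swap)
  finally show ?case
    by simp
qed

lemma adj_pow_Suc_right:
  assumes "finite V" "u \<in> V" "v \<in> V"
  shows "adj_pow V adj (Suc n) u v = (\<Sum>w\<in>V. adj_pow V adj n u w * adj w v)"
proof -
  have "adj_pow V adj 1 w v = adj w v" for w
    using assms(1,3) by (simp add: if_distrib[of "\<lambda>x. _ * x"] sum.delta' cong: if_cong)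
  then show ?thesis
    using adj_pow_add[OF assms(1,2), where m = n and n = 1 and adj = adj] by simp
qed

lemma adj_pow_eigenfunction:
  assumes "finite V" "eigenfunction V adj \<theta> g" "x \<in> V"
  shows "(\<Sum>w\<in>V. adj_pow V adj n x w * g w) = of_real \<theta> ^ n * g x"
  using assms(3)
proof (induction n arbitrary: x)
  case 0
  then show ?case
    using assms(1) by (simp add: if_distrib[of "\<lambda>x. x * _"] sum.delta cong: if_cong)
next
  case (Suc n)
  have "(\<Sum>w\<in>V. adj_pow V adj (Suc n) x w * g w) = (\<Sum>z\<in>V. adj x z * (\<Sum>w\<in>V. adj_pow V adj n z w * g w))"
    unfolding adj_pow.simps sum_distrib_left sum_distrib_right mult.assoc by (rule sum.swap)
  also have "\<dots> = (\<Sum>z\<in>V. adj x z * (of_real \<theta> ^ n * g z))"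
    by (rule sum.cong) (simp_all add: Suc.IH)
  also have "\<dots> = of_real \<theta> ^ n * (\<Sum>z\<in>V. adj x z * g z)"
    by (simp add: sum_distrib_left mult_ac)
  also have "\<dots> = of_real \<theta> ^ Suc n * g x"
    using assms(2) Suc.prems by (simp add: eigenfunction_def)
  finally show ?case .
qed

locale finite_weighted_graph =
  fixes V :: "'a set" and adj :: "'a \<Rightarrow> 'a \<Rightarrow> complex"
  assumes finite_V: "finite V"
begin

lemma summable_norm_transition_series:
  assumes "u \<in> V"
  shows "summable (\<lambda>n. norm ((\<i> * of_real t) ^ n /\<^sub>R fact n * adj_pow V adj n u v))"
proof -
  define M where "M = (\<Sum>p\<in>V \<times> V. cmod (case_prod adj p))"
  have "cmod (adj a b) \<le> M" if "a \<in> V" "b \<in> V" for a b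
    using member_le_sum[of "(a, b)" "V \<times> V" "\<lambda>p. cmod (case_prod adj p)"] that finite_V
    unfolding M_def by auto
  moreover have "0 \<le> M"
    unfolding M_def by (simp add: sum_nonneg)
  ultimately have bound: "cmod (adj_pow V adj n u v) \<le> (real (card V) * M) ^ n" for n
    by (intro adj_pow_norm_le assms) auto
  let ?x = "of_real (\<bar>t\<bar> * (real (card V) * M)) :: complex"
  show ?thesis
  proof (rule summable_comparison_test[OF exI summable_norm_exp[of ?x]], intro allI impI)
    fix n :: nat
    have "norm (norm ((\<i> * of_real t) ^ n /\<^sub>R fact n * adj_pow V adj n u v))
        = \<bar>t\<bar> ^ n / fact n * cmod (adj_pow V adj n u v)"
      by (simp add: norm_mult norm_power field_simps)
    also have "\<dots> \<le> \<bar>t\<bar> ^ n / fact n * (real (card V) * M) ^ n"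
      by (intro mult_left_mono bound) simp
    also have "\<dots> = norm (?x ^ n /\<^sub>R fact n)"
      using \<open>0 \<le> M\<close> by (simp add: norm_mult norm_power power_mult_distrib field_simps)
    finally show "norm (norm ((\<i> * of_real t) ^ n /\<^sub>R fact n * adj_pow V adj n u v))
        \<le> norm (?x ^ n /\<^sub>R fact n)" .
  qed
qed

lemma transition_sums:
  assumes "u \<in> V"
  shows "(\<lambda>n. (\<i> * of_real t) ^ n /\<^sub>R fact n * adj_pow V adj n u v) sums transition V adj t u v"
  unfolding transition_altdef
  by (rule summable_sums[OF summable_norm_cancel[OF summable_norm_transition_series[OF assms]]])

lemma transition_mult_transition_neg:
  assumes "u \<in> V" "v \<in> V"
  shows "(\<Sum>w\<in>V. transition V adj t u w * transition V adj (-t) w v) = (if u = v then 1 else 0)"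
proof -
  define e where "e s n = (\<i> * of_real s) ^ n /\<^sub>R fact n" for s n
  define c where "c w n = (\<Sum>j\<le>n. e t j * adj_pow V adj j u w * (e (-t) (n - j) * adj_pow V adj (n - j) w v))" for w n
  have c_sums: "c w sums (transition V adj t u w * transition V adj (-t) w v)" if "w \<in> V" for w
    unfolding c_def transition_altdef e_def
    by (intro Cauchy_product_sums summable_norm_transition_series assms that)
  have e_add: "e (t + -t) n = (\<Sum>j\<le>n. e t j * e (-t) (n - j))" for n
    unfolding e_def of_real_add distrib_left by (rule exp_series_add_commuting) (simp add: mult.commute)
  have e_zero: "e 0 n = (if n = 0 then 1 else 0)" for n
    by (simp add: e_def)
  have e_cancel: "(\<Sum>j\<le>n. e t j * e (-t) (n - j)) = (if n = 0 then 1 else 0)" for n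
    using e_add[of n] e_zero[of n] by simp
  have "(\<Sum>w\<in>V. c w n) = (\<Sum>j\<le>n. e t j * e (-t) (n - j) * (\<Sum>w\<in>V. adj_pow V adj j u w * adj_pow V adj (n - j) w v))" for n
    unfolding c_def sum_distrib_left by (subst sum.swap) (simp add: mult_ac)
  also have "\<dots> n = (\<Sum>j\<le>n. e t j * e (-t) (n - j)) * adj_pow V adj n u v" for n
    by (simp add: sum_distrib_right adj_pow_add[OF finite_V assms(1), symmetric])
  finally have "(\<Sum>w\<in>V. c w n) = (if n = 0 then (if u = v then 1 else 0) else 0)" for n
    by (simp add: e_cancel)
  then have "(\<lambda>n. \<Sum>w\<in>V. c w n) sums (if u = v then 1 else 0)"
    using sums_single[of 0 "\<lambda>_. if u = v then 1 else 0 :: complex"] by simp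
  moreover have "(\<lambda>n. \<Sum>w\<in>V. c w n) sums (\<Sum>w\<in>V. transition V adj t u w * transition V adj (-t) w v)"
    using c_sums by (rule sums_sum)
  ultimately show ?thesis
    by (rule sums_unique2[symmetric])
qed

lemma transition_eigenfunction:
  assumes "eigenfunction V adj \<theta> g" "u \<in> V"
  shows "(\<Sum>w\<in>V. transition V adj t u w * g w) = exp (\<i> * of_real (t * \<theta>)) * g u"
proof -
  have "(\<lambda>n. \<Sum>w\<in>V. (\<i> * of_real t) ^ n /\<^sub>R fact n * adj_pow V adj n u w * g w)
      sums (\<Sum>w\<in>V. transition V adj t u w * g w)"
    by (intro sums_sum sums_mult2 transition_sums assms(2))
  moreover have "(\<Sum>w\<in>V. (\<i> * of_real t) ^ n /\<^sub>R fact n * adj_pow V adj n u w * g w)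
      = (\<i> * of_real (t * \<theta>)) ^ n /\<^sub>R fact n * g u" for n
  proof -
    have "(\<Sum>w\<in>V. (\<i> * of_real t) ^ n /\<^sub>R fact n * adj_pow V adj n u w * g w)
        = (\<i> * of_real t) ^ n /\<^sub>R fact n * (of_real \<theta> ^ n * g u)"
      unfolding mult.assoc sum_distrib_left[symmetric] adj_pow_eigenfunction[OF finite_V assms] ..
    then show ?thesis
      by (simp add: power_mult_distrib mult_ac)
  qed
  moreover have "(\<lambda>n. (\<i> * of_real (t * \<theta>)) ^ n /\<^sub>R fact n * g u) sums (exp (\<i> * of_real (t * \<theta>)) * g u)"
    by (intro sums_mult2 exp_converges)
  ultimately show ?thesis
    by (simp add: sums_unique2)
qed

end

locale real_symmetric_graph = finite_weighted_graph +
  assumes adj_real: "u \<in> V \<Longrightarrow> v \<in> V \<Longrightarrow> cnj (adj u v) = adj u v"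
    and adj_sym: "u \<in> V \<Longrightarrow> v \<in> V \<Longrightarrow> adj u v = adj v u"
begin

lemma adj_pow_real:
  assumes "u \<in> V"
  shows "cnj (adj_pow V adj n u v) = adj_pow V adj n u v"
  using assms
proof (induction n arbitrary: u)
  case 0
  then show ?case by simp
next
  case (Suc n)
  then show ?case
    by (auto simp: adj_real intro!: sum.cong)
qed

lemma adj_pow_sym:
  assumes "u \<in> V" "v \<in> V"
  shows "adj_pow V adj n u v = adj_pow V adj n v u"
  using assms
proof (induction n arbitrary: u v)
  case 0
  then show ?case by simp
next
  case (Suc n)
  have "adj_pow V adj (Suc n) u v = (\<Sum>w\<in>V. adj_pow V adj n v w * adj w u)"
    by (auto simp: Suc adj_sym[of u] mult.commute intro!: sum.cong)
  also have "\<dots> = adj_pow V adj (Suc n) v u"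
    using adj_pow_Suc_right[OF finite_V Suc.prems(2,1)] by simp
  finally show ?case .
qed

lemma transition_sym:
  assumes "u \<in> V" "v \<in> V"
  shows "transition V adj t u v = transition V adj t v u"
  unfolding transition_def using adj_pow_sym[OF assms] by simp

lemma transition_cnj:
  assumes "u \<in> V"
  shows "cnj (transition V adj t u v) = transition V adj (-t) u v"
proof -
  have series_cnj: "(\<lambda>n. cnj ((\<i> * of_real t) ^ n /\<^sub>R fact n * adj_pow V adj n u v))
      = (\<lambda>n. (\<i> * of_real (-t)) ^ n /\<^sub>R fact n * adj_pow V adj n u v)"
    by (simp add: adj_pow_real[OF assms])
  have "(\<lambda>n. (\<i> * of_real (-t)) ^ n /\<^sub>R fact n * adj_pow V adj n u v) sums cnj (transition V adj t u v)"
    using sums_cnj[THEN iffD2, OF transition_sums[OF assms, of t v]] unfolding series_cnj .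
  then show ?thesis
    using transition_sums[OF assms] by (rule sums_unique2)
qed

lemma transition_row_norm:
  assumes "u \<in> V"
  shows "(\<Sum>w\<in>V. (cmod (transition V adj t u w))\<^sup>2) = 1"
proof -
  have "of_real ((cmod (transition V adj t u w))\<^sup>2) = transition V adj t u w * transition V adj (-t) w u"
    if "w \<in> V" for w
  proof -
    have "transition V adj (-t) w u = cnj (transition V adj t u w)"
      using transition_cnj[OF that, of t u] transition_sym[OF assms that] by simp
    then show ?thesis
      by (simp only: complex_norm_square)
  qed
  then have "of_real (\<Sum>w\<in>V. (cmod (transition V adj t u w))\<^sup>2)
      = (\<Sum>w\<in>V. transition V adj t u w * transition V adj (-t) w u)"
    unfolding of_real_sum by (rule sum.cong[OF refl])
  also have "\<dots> = 1"
    using transition_mult_transition_neg[OF assms assms] by simp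
  finally show ?thesis
    by (simp only: of_real_eq_1_iff)
qed

lemma transition_eq_0_if_PST:
  assumes "u \<in> V" "v \<in> V" "cmod (transition V adj t u v) = 1" "w \<in> V" "w \<noteq> v"
  shows "transition V adj t u w = 0"
proof -
  have "(\<Sum>x\<in>V - {v}. (cmod (transition V adj t u x))\<^sup>2) = 0"
    using transition_row_norm[OF assms(1), of t] assms(2,3) finite_V by (simp add: sum.remove)
  then show ?thesis
    using finite_V assms(4,5) by (simp add: sum_nonneg_eq_0_iff)
qed

lemma PST_eigenfunction:
  assumes "u \<in> V" "v \<in> V" "cmod (transition V adj t u v) = 1" "eigenfunction V adj \<theta> g"
  shows "transition V adj t u v * g v = exp (\<i> * of_real (t * \<theta>)) * g u"
proof -
  have "(\<Sum>w\<in>V. transition V adj t u w * g w) = transition V adj t u v * g v"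
    using transition_eq_0_if_PST[OF assms(1-3)] assms(2) finite_V by (simp add: sum.remove)
  then show ?thesis
    using transition_eigenfunction[OF assms(4,1)] by simp
qed

end


section \<open>The spectrum of J(2k,k,i)\<close>

interpretation Johnson: real_symmetric_graph "J_vertices k" "J_adj i" for k i
proof
  show "finite (J_vertices k)"
    unfolding J_vertices_def by (rule finite_subset[of _ "Pow {1..2*k}"]) auto
qed (auto simp: J_adj_def Int_commute)

definition supersets_count :: "nat \<Rightarrow> nat \<Rightarrow> nat \<Rightarrow> nat" where
  "supersets_count n r t = (if t \<le> r then (n - t) choose (r - t) else 0)"

lemma card_supersets:
  assumes "finite P" "T \<subseteq> P"
  shows "card {C. C \<subseteq> P \<and> card C = r \<and> T \<subseteq> C} = supersets_count (card P) r (card T)"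
proof (cases "card T \<le> r")
  case False
  have "card T \<le> card C" if "C \<subseteq> P" "T \<subseteq> C" for C
    using that assms(1) by (meson card_mono finite_subset)
  then have "{C. C \<subseteq> P \<and> card C = r \<and> T \<subseteq> C} = {}"
    using False by fastforce
  then have "card {C. C \<subseteq> P \<and> card C = r \<and> T \<subseteq> C} = 0"
    by (simp only: card.empty)
  then show ?thesis
    using False by (simp add: supersets_count_def)
next
  case True
  have fin: "finite C" if "C \<subseteq> P" for C
    using that assms(1) by (rule finite_subset)
  have "bij_betw (\<lambda>C. C - T) {C. C \<subseteq> P \<and> card C = r \<and> T \<subseteq> C} {D. D \<subseteq> P - T \<and> card D = r - card T}"
  proof (rule bij_betw_byWitness[where f' = "\<lambda>D. D \<union> T"])
    show "(\<lambda>C. C - T) ` {C. C \<subseteq> P \<and> card C = r \<and> T \<subseteq> C} \<subseteq> {D. D \<subseteq> P - T \<and> card D = r - card T}"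
      using assms fin by (auto simp: card_Diff_subset)
    show "(\<lambda>D. D \<union> T) ` {D. D \<subseteq> P - T \<and> card D = r - card T} \<subseteq> {C. C \<subseteq> P \<and> card C = r \<and> T \<subseteq> C}"
    proof clarify
      fix D assume "D \<subseteq> P - T" "card D = r - card T"
      moreover have "card (D \<union> T) = card D + card T"
        using calculation assms(2) fin by (intro card_Un_disjoint) auto
      ultimately show "D \<union> T \<subseteq> P \<and> card (D \<union> T) = r \<and> T \<subseteq> D \<union> T"
        using assms(2) True by auto
    qed
  qed auto
  then have "card {C. C \<subseteq> P \<and> card C = r \<and> T \<subseteq> C} = card (P - T) choose (r - card T)"
    using assms by (simp add: bij_betw_same_card n_subsets)
  then show ?thesis
    using True assms fin by (simp add: supersets_count_def card_Diff_subset)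
qed

lemma card_subsets_meeting_superset:
  assumes "finite S" "B \<subseteq> S" "T \<subseteq> S" "i \<le> r"
  shows "card {C. C \<subseteq> S \<and> card C = r \<and> card (B \<inter> C) = i \<and> T \<subseteq> C}
       = supersets_count (card B) i (card (T \<inter> B)) * supersets_count (card (S - B)) (r - i) (card (T - B))"
proof -
  let ?L = "{C. C \<subseteq> S \<and> card C = r \<and> card (B \<inter> C) = i \<and> T \<subseteq> C}"
  let ?X = "{C. C \<subseteq> B \<and> card C = i \<and> T \<inter> B \<subseteq> C}"
  let ?Y = "{C. C \<subseteq> S - B \<and> card C = r - i \<and> T - B \<subseteq> C}"
  have fin: "finite C" if "C \<subseteq> S" for C
    using that assms(1) by (rule finite_subset)
  have card_split: "card C = card (C \<inter> B) + card (C - B)" if "C \<subseteq> S" for C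
    using fin[OF that] by (metis Diff_Diff_Int Int_commute card_Diff_subset_Int card_mono
        finite_Int inf_le2 le_add_diff_inverse)
  have union_mem: "C1 \<union> C2 \<in> ?L" if "C1 \<in> ?X" "C2 \<in> ?Y" for C1 C2
  proof -
    have "B \<inter> (C1 \<union> C2) = C1"
      using that by auto
    moreover have "card (C1 \<union> C2) = card C1 + card C2"
      using that assms(2) fin[of C1] fin[of C2] by (intro card_Un_disjoint) auto
    ultimately show ?thesis
      using that assms(2,4) by auto
  qed
  have "bij_betw (\<lambda>C. (C \<inter> B, C - B)) ?L (?X \<times> ?Y)"
  proof (rule bij_betw_byWitness[where f' = "\<lambda>(C1, C2). C1 \<union> C2"])
    show "(\<lambda>C. (C \<inter> B, C - B)) ` ?L \<subseteq> ?X \<times> ?Y"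
      using card_split by (fastforce simp: Int_commute)
    show "(\<lambda>(C1, C2). C1 \<union> C2) ` (?X \<times> ?Y) \<subseteq> ?L"
    proof (rule image_subsetI)
      fix p assume "p \<in> ?X \<times> ?Y"
      then obtain C1 C2 where p: "p = (C1, C2)" and "C1 \<in> ?X" "C2 \<in> ?Y"
        by blast
      show "(\<lambda>(C1, C2). C1 \<union> C2) p \<in> ?L"
        unfolding p prod.case using \<open>C1 \<in> ?X\<close> \<open>C2 \<in> ?Y\<close> by (rule union_mem)
    qed
  qed auto
  then have "card ?L = card ?X * card ?Y"
    by (simp add: bij_betw_same_card card_cartesian_product)
  moreover have "card ?X = supersets_count (card B) i (card (T \<inter> B))"
    using fin[OF assms(2)] by (intro card_supersets) auto
  moreover have "card ?Y = supersets_count (card (S - B)) (r - i) (card (T - B))"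
    using assms(1,3) by (intro card_supersets) auto
  ultimately show ?thesis
    by simp
qed

definition superset_indicator :: "'a set \<Rightarrow> 'a set \<Rightarrow> complex" where
  "superset_indicator T C = (if T \<subseteq> C then 1 else 0)"

definition Johnson_count :: "nat \<Rightarrow> nat \<Rightarrow> nat \<Rightarrow> nat \<Rightarrow> nat" where
  "Johnson_count k i s t = supersets_count k i s * supersets_count k (k - i) t"

lemma Johnson_adj_sum_superset_indicator:
  assumes "B \<in> J_vertices k" "T \<subseteq> {1..2*k}" "i < k"
  shows "(\<Sum>C\<in>J_vertices k. J_adj i B C * superset_indicator T C)
       = of_nat (Johnson_count k i (card (T \<inter> B)) (card (T - B)))"
proof -
  have B: "B \<subseteq> {1..2*k}" "card B = k"
    using assms(1) by (auto simp: J_vertices_def)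
  then have "card ({1..2*k} - B) = k"
    by (simp add: card_Diff_subset finite_subset)
  have "(\<Sum>C\<in>J_vertices k. J_adj i B C * superset_indicator T C)
      = (\<Sum>C\<in>J_vertices k. if C \<noteq> B \<and> card (B \<inter> C) = i \<and> T \<subseteq> C then 1 else 0)"
    by (rule sum.cong) (auto simp: J_adj_def superset_indicator_def)
  also have "\<dots> = of_nat (card {C \<in> J_vertices k. C \<noteq> B \<and> card (B \<inter> C) = i \<and> T \<subseteq> C})"
    using Johnson.finite_V by (simp add: sum.inter_filter[symmetric])
  also have "{C \<in> J_vertices k. C \<noteq> B \<and> card (B \<inter> C) = i \<and> T \<subseteq> C}
      = {C. C \<subseteq> {1..2*k} \<and> card C = k \<and> card (B \<inter> C) = i \<and> T \<subseteq> C}"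
    using B assms(3) by (auto simp: J_vertices_def)
  also have "card \<dots> = Johnson_count k i (card (T \<inter> B)) (card (T - B))"
    using B \<open>card ({1..2*k} - B) = k\<close> assms by (simp add: card_subsets_meeting_superset Johnson_count_def)
  finally show ?thesis .
qed

definition Johnson_eig0 :: "nat \<Rightarrow> nat \<Rightarrow> real" where
  "Johnson_eig0 k i = real (Johnson_count k i 0 0)"

definition Johnson_eig1 :: "nat \<Rightarrow> nat \<Rightarrow> real" where
  "Johnson_eig1 k i = real (Johnson_count k i 1 0) - real (Johnson_count k i 0 1)"

definition Johnson_eig2 :: "nat \<Rightarrow> nat \<Rightarrow> real" where
  "Johnson_eig2 k i = real (Johnson_count k i 2 0) - 2 * real (Johnson_count k i 1 1) + real (Johnson_count k i 0 2)"

lemma eigenfunction_Johnson_eig0: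
  assumes "i < k"
  shows "eigenfunction (J_vertices k) (J_adj i) (Johnson_eig0 k i) (\<lambda>_. 1)"
  using Johnson_adj_sum_superset_indicator[of _ k "{}", OF _ _ assms]
  by (simp add: eigenfunction_def superset_indicator_def Johnson_eig0_def)

lemma eigenfunction_Johnson_eig1:
  assumes "i < k" "x \<in> {1..2*k}" "x' \<in> {1..2*k}" "x \<noteq> x'"
  shows "eigenfunction (J_vertices k) (J_adj i) (Johnson_eig1 k i)
           (\<lambda>C. superset_indicator {x} C - superset_indicator {x'} C)" (is "eigenfunction _ _ _ ?g")
  unfolding eigenfunction_def
proof
  fix B assume B: "B \<in> J_vertices k"
  have "(\<Sum>C\<in>J_vertices k. J_adj i B C * ?g C)
      = of_nat (Johnson_count k i (card ({x} \<inter> B)) (card ({x} - B)))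
        - of_nat (Johnson_count k i (card ({x'} \<inter> B)) (card ({x'} - B)))"
    using assms by (simp add: right_diff_distrib sum_subtractf Johnson_adj_sum_superset_indicator[OF B])
  also have "\<dots> = of_real (Johnson_eig1 k i) * ?g B"
    using assms(4) by (cases "x \<in> B"; cases "x' \<in> B") (simp_all add: Johnson_eig1_def superset_indicator_def insert_Diff_if)
  finally show "(\<Sum>C\<in>J_vertices k. J_adj i B C * ?g C) = of_real (Johnson_eig1 k i) * ?g B" .
qed

lemma eigenfunction_Johnson_eig2:
  assumes "i < k" "{x, x', y, y'} \<subseteq> {1..2*k}" "distinct [x, x', y, y']"
  shows "eigenfunction (J_vertices k) (J_adj i) (Johnson_eig2 k i)
           (\<lambda>C. superset_indicator {x, y} C - superset_indicator {x, y'} C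
               - superset_indicator {x', y} C + superset_indicator {x', y'} C)"
    (is "eigenfunction _ _ _ ?g")
  unfolding eigenfunction_def
proof
  fix B assume B: "B \<in> J_vertices k"
  let ?N = "\<lambda>T. of_nat (Johnson_count k i (card (T \<inter> B)) (card (T - B))) :: complex"
  have "(\<Sum>C\<in>J_vertices k. J_adj i B C * ?g C)
      = ?N {x, y} - ?N {x, y'} - ?N {x', y} + ?N {x', y'}"
    using assms by (simp add: algebra_simps sum_subtractf sum.distrib Johnson_adj_sum_superset_indicator[OF B])
  also have "\<dots> = of_real (Johnson_eig2 k i) * ?g B"
    using assms(3)
    by (cases "x \<in> B"; cases "x' \<in> B"; cases "y \<in> B"; cases "y' \<in> B")
      (simp_all add: Johnson_eig2_def superset_indicator_def insert_Diff_if numeral_2_eq_2)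
  finally show "(\<Sum>C\<in>J_vertices k. J_adj i B C * ?g C) = of_real (Johnson_eig2 k i) * ?g B" .
qed

lemma supersets_count_1:
  "0 < r \<Longrightarrow> n * supersets_count n r 1 = r * (n choose r)"
  by (simp add: supersets_count_def times_binomial_minus1_eq)

lemma supersets_count_2:
  assumes "0 < r"
  shows "n * (n - 1) * supersets_count n r 2 = r * (r - 1) * (n choose r)"
proof (cases "r = 1")
  case True
  then show ?thesis by (simp add: supersets_count_def)
next
  case False
  have "r * (n choose r) = n * ((n - 1) choose (r - 1))"
    using assms by (rule times_binomial_minus1_eq)
  moreover have "(r - 1) * ((n - 1) choose (r - 1)) = (n - 1) * ((n - 2) choose (r - 2))"
    using assms False times_binomial_minus1_eq[of "r - 1" "n - 1"] by (simp add: numeral_2_eq_2)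
  ultimately have "r * (r - 1) * (n choose r) = n * (n - 1) * ((n - 2) choose (r - 2))"
    by (metis mult.assoc mult.commute)
  then show ?thesis
    using assms False by (simp add: supersets_count_def)
qed

lemma Johnson_eigenvalue_relation:
  assumes "0 < i" "i < k"
  shows "real k * (real k - 1) * (Johnson_eig0 k i - Johnson_eig2 k i)
       = real i * (2 * real k - 1) * (Johnson_eig0 k i - Johnson_eig1 k i)"
proof -
  define c where "c = real (k choose i)"
  define \<alpha> where "\<alpha> = real (supersets_count k i 1)"
  define \<beta> where "\<beta> = real (supersets_count k (k - i) 1)"
  define \<gamma> where "\<gamma> = real (supersets_count k i 2)"
  define \<delta> where "\<delta> = real (supersets_count k (k - i) 2)"
  have choose_compl: "k choose (k - i) = k choose i"
    using assms by (simp add: binomial_symmetric[symmetric])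
  have "real (k * supersets_count k i 1) = real (i * (k choose i))"
    using supersets_count_1[of i k] assms by simp
  then have \<alpha>: "real k * \<alpha> = real i * c"
    unfolding \<alpha>_def c_def by simp
  have "real (k * supersets_count k (k - i) 1) = real ((k - i) * (k choose i))"
    using supersets_count_1[of "k - i" k] assms choose_compl by simp
  then have \<beta>: "real k * \<beta> = (real k - real i) * c"
    using assms unfolding \<beta>_def c_def by (simp add: of_nat_diff)
  have "real (k * (k - 1) * supersets_count k i 2) = real (i * (i - 1) * (k choose i))"
    using supersets_count_2[of i k] assms by simp
  then have \<gamma>: "real k * (real k - 1) * \<gamma> = real i * (real i - 1) * c"
    using assms unfolding \<gamma>_def c_def by (simp add: of_nat_diff)
  have "real (k * (k - 1) * supersets_count k (k - i) 2) = real ((k - i) * (k - i - 1) * (k choose i))"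
    using supersets_count_2[of "k - i" k] assms choose_compl by simp
  then have \<delta>: "real k * (real k - 1) * \<delta> = (real k - real i) * (real k - real i - 1) * c"
    using assms unfolding \<delta>_def c_def by (simp add: of_nat_diff)
  have "real k * (real k * (real k - 1) * (c * c - (\<gamma> * c - 2 * (\<alpha> * \<beta>) + c * \<delta>)))
      = real k * (real i * (2 * real k - 1) * (c * c - (\<alpha> * c - c * \<beta>)))"
    using \<alpha> \<beta> \<gamma> \<delta> by algebra
  then have "real k * (real k - 1) * (c * c - (\<gamma> * c - 2 * (\<alpha> * \<beta>) + c * \<delta>))
      = real i * (2 * real k - 1) * (c * c - (\<alpha> * c - c * \<beta>))"
    using assms by simp
  moreover have "supersets_count k i 0 = k choose i" "supersets_count k (k - i) 0 = k choose i"
    using choose_compl by (simp_all add: supersets_count_def)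
  ultimately show ?thesis
    unfolding Johnson_eig0_def Johnson_eig1_def Johnson_eig2_def Johnson_count_def
      \<alpha>_def \<beta>_def \<gamma>_def \<delta>_def c_def
    by (simp add: mult_ac)
qed


section \<open>Ruling out perfect state transfer\<close>

lemma exists_two_power_times_odd:
  fixes n :: nat
  assumes "0 < n"
  shows "\<exists>f m. n = 2 ^ f * m \<and> odd m"
  using assms
proof (induction n rule: less_induct)
  case (less n)
  show ?case
  proof (cases "even n")
    case True
    then obtain h where "n = 2 * h" "0 < h" "h < n"
      using less.prems by fastforce
    with less.IH obtain f m where "h = 2 ^ f * m" "odd m"
      by blast
    with \<open>n = 2 * h\<close> show ?thesis
      by (intro exI[of _ "Suc f"] exI[of _ m]) simp
  next
    case False
    then show ?thesis
      by (intro exI[of _ 0] exI[of _ n]) simp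
  qed
qed

text \<open>Since (k - i) C(k,i) = k C(k-1,i), the parity hypotheses make 2 divide k - i
  more often than k, so i and k have the same 2-adic valuation.\<close>
lemma common_two_power_of_binomial_parity:
  fixes k i :: nat
  assumes "0 < i" "i < k" "odd (k choose i)" "even ((k - 1) choose i)"
  shows "\<exists>f k' i'. k = 2 ^ f * k' \<and> i = 2 ^ f * i' \<and> odd i'"
proof -
  obtain f k' where k: "k = 2 ^ f * k'" "odd k'"
    using exists_two_power_times_odd[of k] assms(2) by auto
  have "2 ^ Suc f dvd k * ((k - 1) choose i)"
    using k assms(4) by (auto simp: mult_dvd_mono)
  then have "2 ^ Suc f dvd (k - i) * (k choose i)"
    by (simp only: binomial_absorb_comp)
  then have "2 ^ Suc f dvd k - i"
    using assms(3) by (simp add: coprime_dvd_mult_left_iff)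
  then obtain r where r: "k - i = 2 ^ Suc f * r"
    by blast
  have "i = 2 ^ f * (k' - 2 * r)"
    using assms(2) k r by (simp add: diff_mult_distrib2)
  moreover have "0 < k' - 2 * r"
    using calculation assms(1) by (cases "k' - 2 * r") auto
  then have "odd (k' - 2 * r)"
    using k(2) by presburger
  ultimately show ?thesis
    using k(1) by blast
qed

lemma Johnson_eigenvalue_gaps_odd_ratio:
  assumes "0 < i" "i < k" "odd (k choose i)" "even ((k - 1) choose i)"
  shows "\<exists>p q. odd p \<and> real p * (Johnson_eig0 k i - Johnson_eig1 k i) = real q * (Johnson_eig0 k i - Johnson_eig2 k i)"
proof -
  obtain f k' i' where fk: "k = 2 ^ f * k'" "i = 2 ^ f * i'" "odd i'"
    using common_two_power_of_binomial_parity[OF assms] by blast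
  have rk: "real k = 2 ^ f * real k'" and ri: "real i = 2 ^ f * real i'"
    using fk by simp_all
  have r1: "real (k - 1) = real k - 1" "real (2 * k - 1) = 2 * real k - 1"
    using assms(2) by (simp_all add: of_nat_diff)
  have "2 ^ f * (real (i' * (2 * k - 1)) * (Johnson_eig0 k i - Johnson_eig1 k i))
      = real i * (2 * real k - 1) * (Johnson_eig0 k i - Johnson_eig1 k i)"
    unfolding of_nat_mult r1 ri by (simp add: mult_ac)
  also have "\<dots> = real k * (real k - 1) * (Johnson_eig0 k i - Johnson_eig2 k i)"
    using Johnson_eigenvalue_relation[OF assms(1,2)] by simp
  also have "\<dots> = 2 ^ f * (real (k' * (k - 1)) * (Johnson_eig0 k i - Johnson_eig2 k i))"
    unfolding of_nat_mult r1 rk by (simp add: mult_ac)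
  finally have "real (i' * (2 * k - 1)) * (Johnson_eig0 k i - Johnson_eig1 k i)
      = real (k' * (k - 1)) * (Johnson_eig0 k i - Johnson_eig2 k i)"
    by simp
  moreover have "odd (i' * (2 * k - 1))"
    using fk(3) assms(2) by simp
  ultimately show ?thesis
    by blast
qed

lemma exp_phases_odd_ratio_False:
  fixes a b :: real
  assumes "exp (\<i> * of_real a) = -1" "exp (\<i> * of_real b) = 1" "real p * a = real q * b" "odd p"
  shows False
proof -
  have "exp (\<i> * of_real a) ^ p = exp (of_nat p * (\<i> * of_real a))"
    by (rule exp_of_nat_mult[symmetric])
  also have "\<dots> = exp (of_nat q * (\<i> * of_real b))"
    using arg_cong[OF assms(3), of "\<lambda>x. exp (\<i> * of_real x)"] by (simp add: mult_ac)
  also have "\<dots> = exp (\<i> * of_real b) ^ q"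
    by (rule exp_of_nat_mult)
  finally show False
    using assms(1,2,4) by simp
qed

lemma Johnson_PST_vertices_disjoint:
  assumes "i < k" "u \<in> J_vertices k" "v \<in> J_vertices k" "u \<noteq> v"
    and PST: "cmod (transition (J_vertices k) (J_adj i) \<tau> u v) = 1"
  shows "u \<inter> v = {}"
proof (rule ccontr)
  assume "u \<inter> v \<noteq> {}"
  then obtain x where x: "x \<in> u" "x \<in> v"
    by blast
  let ?h = "transition (J_vertices k) (J_adj i) \<tau> u v"
  let ?E = "exp (\<i> * of_real (\<tau> * Johnson_eig1 k i))"
  have u: "u \<subseteq> {1..2*k}" "card u = k" and v: "v \<subseteq> {1..2*k}" "card v = k"
    using assms(2,3) by (auto simp: J_vertices_def)
  then have fin: "finite u" "finite v"
    by (auto intro: finite_subset)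
  have "card (u \<union> v) + card (u \<inter> v) = card {1..2*k}"
    using card_Un_Int[OF fin] u v by simp
  then have "u \<union> v \<noteq> {1..2*k}"
    using \<open>u \<inter> v \<noteq> {}\<close> fin by auto
  then obtain x' where x': "x' \<in> {1..2*k}" "x' \<notin> u" "x' \<notin> v"
    using u v by blast
  obtain z where z: "z \<in> u" "z \<notin> v"
    using card_subset_eq[OF fin(2), of u] u v assms(4) by auto
  obtain z' where z': "z' \<in> v" "z' \<notin> u"
    using card_subset_eq[OF fin(1), of v] u v assms(4) by auto
  have "?h * (superset_indicator {x} v - superset_indicator {x'} v)
      = ?E * (superset_indicator {x} u - superset_indicator {x'} u)"
    using x x' u by (intro Johnson.PST_eigenfunction[OF assms(2,3) PST] eigenfunction_Johnson_eig1 assms(1)) auto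
  then have "?h = ?E"
    using x x' by (simp add: superset_indicator_def)
  moreover have "?h * (superset_indicator {z} v - superset_indicator {z'} v)
      = ?E * (superset_indicator {z} u - superset_indicator {z'} u)"
    using z z' u v by (intro Johnson.PST_eigenfunction[OF assms(2,3) PST] eigenfunction_Johnson_eig1 assms(1)) auto
  then have "- ?h = ?E"
    using z z' by (simp add: superset_indicator_def)
  ultimately show False
    using PST by simp
qed

lemma Johnson_PST_antipodal_phases:
  assumes "2 \<le> k" "i < k" "u \<in> J_vertices k" "v \<in> J_vertices k" "u \<inter> v = {}"
    and PST: "cmod (transition (J_vertices k) (J_adj i) \<tau> u v) = 1"
  shows "exp (\<i> * of_real (\<tau> * (Johnson_eig0 k i - Johnson_eig1 k i))) = -1"
    and "exp (\<i> * of_real (\<tau> * (Johnson_eig0 k i - Johnson_eig2 k i))) = 1"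
proof -
  let ?h = "transition (J_vertices k) (J_adj i) \<tau> u v"
  let ?E = "\<lambda>\<theta>. exp (\<i> * of_real (\<tau> * \<theta>))"
  have u: "u \<subseteq> {1..2*k}" "card u = k" and v: "v \<subseteq> {1..2*k}" "card v = k"
    using assms(3,4) by (auto simp: J_vertices_def)
  obtain x y where xy: "x \<in> u" "y \<in> u" "x \<noteq> y"
    using u assms(1) by (metis card_le_Suc0_iff_eq finite_subset finite_atLeastAtMost not_less_eq_eq numeral_2_eq_2)
  obtain x' y' where xy': "x' \<in> v" "y' \<in> v" "x' \<noteq> y'"
    using v assms(1) by (metis card_le_Suc0_iff_eq finite_subset finite_atLeastAtMost not_less_eq_eq numeral_2_eq_2)
  have outside: "x \<notin> v" "y \<notin> v" "x' \<notin> u" "y' \<notin> u"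
    using xy xy' assms(5) by auto
  have "?h * 1 = ?E (Johnson_eig0 k i) * 1"
    by (intro Johnson.PST_eigenfunction[OF assms(3,4) PST] eigenfunction_Johnson_eig0 assms(2))
  then have E0: "?E (Johnson_eig0 k i) = ?h"
    by simp
  have "?h * (superset_indicator {x} v - superset_indicator {x'} v)
      = ?E (Johnson_eig1 k i) * (superset_indicator {x} u - superset_indicator {x'} u)"
    using xy xy' outside u v by (intro Johnson.PST_eigenfunction[OF assms(3,4) PST] eigenfunction_Johnson_eig1 assms(2)) auto
  then have E1: "?E (Johnson_eig1 k i) = - ?h"
    using xy xy' outside by (simp add: superset_indicator_def)
  have "?h * (superset_indicator {x, y} v - superset_indicator {x, y'} v
          - superset_indicator {x', y} v + superset_indicator {x', y'} v)
      = ?E (Johnson_eig2 k i) * (superset_indicator {x, y} u - superset_indicator {x, y'} u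
          - superset_indicator {x', y} u + superset_indicator {x', y'} u)"
    using xy xy' outside u v by (intro Johnson.PST_eigenfunction[OF assms(3,4) PST] eigenfunction_Johnson_eig2 assms(2)) auto
  then have E2: "?E (Johnson_eig2 k i) = ?h"
    using xy xy' outside by (simp add: superset_indicator_def)
  have "?h \<noteq> 0"
    using PST by auto
  have "?E (\<theta> - \<theta>') = ?E \<theta> / ?E \<theta>'" for \<theta> \<theta>'
    by (simp add: right_diff_distrib exp_diff)
  then show "?E (Johnson_eig0 k i - Johnson_eig1 k i) = -1" and "?E (Johnson_eig0 k i - Johnson_eig2 k i) = 1"
    using E0 E1 E2 \<open>?h \<noteq> 0\<close> by simp_all
qed

theorem mainTheorem9:
  fixes k i :: nat
  assumes "k \<ge> 2" and "1 \<le> i" and "i \<le> k - 1"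
    and "odd (k choose i)" and "even ((k - 1) choose i)"
  shows "\<not> has_PST (J_vertices k) (J_adj i)"
proof
  assume "has_PST (J_vertices k) (J_adj i)"
  then obtain u v \<tau> where uv: "u \<in> J_vertices k" "v \<in> J_vertices k" "u \<noteq> v"
    and PST: "cmod (transition (J_vertices k) (J_adj i) \<tau> u v) = 1"
    unfolding has_PST_def by blast
  have "0 < i" "i < k"
    using assms(1-3) by auto
  then have "u \<inter> v = {}"
    using Johnson_PST_vertices_disjoint uv PST by blast
  then have phases: "exp (\<i> * of_real (\<tau> * (Johnson_eig0 k i - Johnson_eig1 k i))) = -1"
      "exp (\<i> * of_real (\<tau> * (Johnson_eig0 k i - Johnson_eig2 k i))) = 1"
    using Johnson_PST_antipodal_phases[OF assms(1) \<open>i < k\<close> uv(1,2) _ PST] by blast+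
  obtain p q where "odd p"
    and "real p * (Johnson_eig0 k i - Johnson_eig1 k i) = real q * (Johnson_eig0 k i - Johnson_eig2 k i)"
    using Johnson_eigenvalue_gaps_odd_ratio \<open>0 < i\<close> \<open>i < k\<close> assms(4,5) by blast
  then have "real p * (\<tau> * (Johnson_eig0 k i - Johnson_eig1 k i)) = real q * (\<tau> * (Johnson_eig0 k i - Johnson_eig2 k i))"
    by (metis mult.left_commute)
  with phases \<open>odd p\<close> show False
    by (intro exp_phases_odd_ratio_False)
qed

end
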